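(* Let $l,t,s,x,n$ be integers with $2\leq l\leq t$, $s\geq l+1$, $n\geq 2s+1$, $s\geq x\geq l$ and $n\geq x+(t-1)\binom{x}{l}+2(s-x)+1$. Let $X$ be a $K_{1,l}$-free graph on $x$ vertices with $e(X)=ex(x,K_{1,l})$, and let $S$ be a $K_{l,t}$-free graph on $2(s-x)+1$ vertices with $e(S)=ex(2(s-x)+1,K_{l,t})$, with $V(X)\cap V(S)=\emptyset$. Build a graph $G$ as follows: start from the disjoint union of $X$ and $S$; for each $l$-subset $F\subseteq V(X)$ add $t-1$ new vertices $v_{F,1},\ldots,v_{F,t-1}$, each joined to every vertex of $F$; fix an $(l-1)$-subset $F_0\subseteq V(X)$; add a set $U$ of $n-x-(t-1)\binom{x}{l}-2(s-x)-1$ new vertices, each joined to every vertex of $F_0$; and join every vertex of $S$ to every vertex of $F_0$. Call the resulting $n$-vertex graph $G_1^x$; and let $G_2^x$ be the graph obtained from $G_1^x$ by deleting all edges between $V(S)$ and $V(X)$. (i) If $2(s-x)+1\leq t$, then $G_1^x$ is $\{K_{l,t},M_{s+1}\}$-free. (ii) If $2(s-x)+1\geq t+1$, then $G_2^x$ is $\{K_{l,t},M_{s+1}\}$-free.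
   Context: All graphs are finite and simple. A graph is $\mathscr{F}$-free if it contains no member of $\mathscr{F}$ as a subgraph; $ex(m,F)$ is the maximum number of edges of an $m$-vertex $F$-free graph. $K_{a,b}$ is the complete bipartite graph with parts of sizes $a,b$; $M_{s+1}$ is the matching of $s+1$ pairwise disjoint edges. *)

theory Defs
  imports Main
begin

definition graph :: "'a set \<Rightarrow> 'a set set \<Rightarrow> bool" where
  "graph V E \<longleftrightarrow> finite V \<and> (\<forall>e\<in>E. e \<subseteq> V \<and> card e = 2)"

definition has_Kab :: "'a set \<Rightarrow> 'a set set \<Rightarrow> nat \<Rightarrow> nat \<Rightarrow> bool" where
  "has_Kab V E a b \<longleftrightarrow> (\<exists>A B. A \<subseteq> V \<and> B \<subseteq> V \<and> A \<inter> B = {} \<and>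
      card A = a \<and> card B = b \<and> (\<forall>u\<in>A. \<forall>w\<in>B. {u, w} \<in> E))"

definition has_matching :: "'a set set \<Rightarrow> nat \<Rightarrow> bool" where
  "has_matching E k \<longleftrightarrow> (\<exists>M. M \<subseteq> E \<and> finite M \<and> card M = k \<and> pairwise disjnt M)"

text \<open>ex(m, K_{a,b}): maximum number of edges of an m-vertex K_{a,b}-free graph
  (vertex set taken to be {0..<m}; the quantity is isomorphism invariant).\<close>
definition ex_Kab :: "nat \<Rightarrow> nat \<Rightarrow> nat \<Rightarrow> nat" where
  "ex_Kab m a b = Max {card E | E. graph {..<m} E \<and> \<not> has_Kab {..<m::nat} E a b}"

text \<open>Vertices of the constructed graph: old vertices (of X and S), new vertices v_{F,i},
  and the vertices of U.\<close>
datatype 'a vtx = Old 'a | New "'a set" nat | UV nat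

definition G1_V :: "'a set \<Rightarrow> 'a set \<Rightarrow> nat \<Rightarrow> nat \<Rightarrow> nat \<Rightarrow> 'a vtx set" where
  "G1_V VX VS l t u =
     Old ` (VX \<union> VS)
     \<union> {New F i | F i. F \<subseteq> VX \<and> card F = l \<and> 1 \<le> i \<and> i \<le> t - 1}
     \<union> {UV j | j. j < u}"

definition G1_E :: "'a set \<Rightarrow> 'a set set \<Rightarrow> 'a set \<Rightarrow> 'a set set \<Rightarrow> 'a set
                    \<Rightarrow> nat \<Rightarrow> nat \<Rightarrow> nat \<Rightarrow> 'a vtx set set" where
  "G1_E VX EdX VS EdS F0 l t u =
     (\<lambda>e. Old ` e) ` (EdX \<union> EdS)
     \<union> {{New F i, Old v} | F i v. F \<subseteq> VX \<and> card F = l \<and> 1 \<le> i \<and> i \<le> t - 1 \<and> v \<in> F}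
     \<union> {{UV j, Old v} | j v. j < u \<and> v \<in> F0}
     \<union> {{Old w, Old v} | w v. w \<in> VS \<and> v \<in> F0}"

definition G2_E :: "'a set \<Rightarrow> 'a set set \<Rightarrow> 'a set \<Rightarrow> 'a set set \<Rightarrow> 'a set
                    \<Rightarrow> nat \<Rightarrow> nat \<Rightarrow> nat \<Rightarrow> 'a vtx set set" where
  "G2_E VX EdX VS EdS F0 l t u =
     G1_E VX EdX VS EdS F0 l t u - {{Old w, Old v} | w v. w \<in> VS \<and> v \<in> VX}"

end

theory Submission
  imports Defs
begin

(*
  Every edge of G_1^x meets V(X) or is an edge of S, so a matching has at most
  |X| + floor(|S|/2) = s edges.

  For K_{l,t}: a vertex v_{F,i} sees exactly F and a vertex of U sees only F_0,
  which has l - 1 elements. Since X has maximum degree below l, the only common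
  neighbours of an l-set F of V(X) outside F are the t - 1 vertices v_{F,i}; hence
  a copy of K_{l,t} avoids all new vertices. A vertex of X outside F_0 (in G_2^x:
  any vertex of X) has fewer than l neighbours among the old vertices, so the copy
  lies on F_0 and V(S), which has at most l - 1 + t vertices when |S| <= t, resp.
  inside S, which is K_{l,t}-free.
*)

definition neighbours :: "'a set set \<Rightarrow> 'a \<Rightarrow> 'a set" where
  "neighbours E v = {w. {v, w} \<in> E}"

lemma neighbours_graphD: "graph V E \<Longrightarrow> w \<in> neighbours E v \<Longrightarrow> v \<in> V \<and> w \<in> V"
  unfolding graph_def neighbours_def by blast

lemma neighbours_mono: "E \<subseteq> E' \<Longrightarrow> neighbours E v \<subseteq> neighbours E' v"
  unfolding neighbours_def by blast

lemma neighbours_subset: "graph V E \<Longrightarrow> neighbours E v \<subseteq> V"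
  using neighbours_graphD by fast

lemma card_neighbours_less:
  assumes "graph V E" "\<not> has_Kab V E 1 l" "1 \<le> l"
  shows "card (neighbours E v) < l"
proof (rule ccontr)
  assume "\<not> card (neighbours E v) < l"
  then obtain B where B: "B \<subseteq> neighbours E v" "card B = l"
    by (meson not_less obtain_subset_with_card_n)
  then obtain w where "w \<in> B" using assms(3) by fastforce
  then have "v \<in> V" using B neighbours_graphD[OF assms(1)] by blast
  moreover have "v \<notin> B"
    using B assms(1) unfolding graph_def neighbours_def by fastforce
  ultimately have "has_Kab V E 1 l"
    using B neighbours_subset[OF assms(1)] unfolding has_Kab_def neighbours_def
    by (intro exI[of _ "{v}"] exI[of _ B]) auto
  with assms(2) show False ..
qed

lemma has_Kab_iff_neighbours:
  "has_Kab V E a b \<longleftrightarrow> (\<exists>A B. A \<subseteq> V \<and> B \<subseteq> V \<and> A \<inter> B = {} \<and> card A = a \<and> card B = b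
     \<and> (\<forall>v\<in>A. B \<subseteq> neighbours E v) \<and> (\<forall>w\<in>B. A \<subseteq> neighbours E w))"
proof -
  have "(\<forall>u\<in>A. \<forall>w\<in>B. {u, w} \<in> E) \<longleftrightarrow>
      (\<forall>v\<in>A. B \<subseteq> neighbours E v) \<and> (\<forall>w\<in>B. A \<subseteq> neighbours E w)" for A B
    unfolding neighbours_def by (auto, metis insert_commute)
  then show ?thesis unfolding has_Kab_def by simp
qed

lemma card_matching_le:
  assumes "pairwise disjnt M" "finite M" "finite X" "finite Y"
    and "\<And>e. e \<in> M \<Longrightarrow> e \<inter> X \<noteq> {} \<or> (e \<subseteq> Y \<and> card e = 2)"
  shows "card M \<le> card X + card Y div 2"
proof -
  define MX where "MX = {e \<in> M. e \<inter> X \<noteq> {}}"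
  define MY where "MY = M - MX"
  have "card MX \<le> card X"
  proof -
    have "\<forall>e\<in>MX. \<exists>v. v \<in> e \<inter> X" unfolding MX_def by auto
    then obtain f where f: "\<forall>e\<in>MX. f e \<in> e \<inter> X" by metis
    have "inj_on f MX"
    proof
      fix e1 e2 assume e: "e1 \<in> MX" "e2 \<in> MX" "f e1 = f e2"
      then have "f e1 \<in> e1 \<inter> e2" using f by auto
      then show "e1 = e2"
        using pairwiseD[OF assms(1)] e unfolding MX_def disjnt_def by blast
    qed
    moreover have "f ` MX \<subseteq> X" using f by blast
    ultimately show ?thesis using assms(3) by (rule card_inj_on_le)
  qed
  moreover have "2 * card MY \<le> card Y"
  proof -
    have MY: "\<And>e. e \<in> MY \<Longrightarrow> e \<subseteq> Y \<and> card e = 2"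
      using assms(5) unfolding MY_def MX_def by blast
    have "card (\<Union>MY) = (\<Sum>e\<in>MY. card e)"
    proof (rule card_Union_disjoint)
      show "pairwise disjnt MY" using assms(1) unfolding MY_def by (rule pairwise_subset) blast
      show "finite e" if "e \<in> MY" for e using MY[OF that] by (simp add: card_ge_0_finite)
    qed
    then have "2 * card MY = card (\<Union>MY)" using MY by simp
    also have "\<dots> \<le> card Y" using MY assms(4) by (intro card_mono) auto
    finally show ?thesis .
  qed
  moreover have "card M = card MX + card MY"
  proof -
    have "M = MX \<union> MY" "MX \<inter> MY = {}" unfolding MY_def MX_def by auto
    then show ?thesis using assms(2) by (metis card_Un_disjoint finite_Un)
  qed
  ultimately show ?thesis by linarith
qed

lemma G2_E_subset_G1_E: "G2_E VX EdX VS EdS F0 l t u \<subseteq> G1_E VX EdX VS EdS F0 l t u"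
  unfolding G2_E_def by blast

lemma neighbours_New_G1:
  "neighbours (G1_E VX EdX VS EdS F0 l t u) (New F i) =
     (if F \<subseteq> VX \<and> card F = l \<and> 1 \<le> i \<and> i \<le> t - 1 then Old ` F else {})"
  unfolding neighbours_def G1_E_def by (auto simp: doubleton_eq_iff)

lemma neighbours_UV_G1:
  "neighbours (G1_E VX EdX VS EdS F0 l t u) (UV j) = (if j < u then Old ` F0 else {})"
  unfolding neighbours_def G1_E_def by (auto simp: doubleton_eq_iff)

lemma Old_in_neighbours_G1:
  "Old w \<in> neighbours (G1_E VX EdX VS EdS F0 l t u) (Old v) \<longleftrightarrow>
     w \<in> neighbours (EdX \<union> EdS) v \<or> (v \<in> VS \<and> w \<in> F0) \<or> (v \<in> F0 \<and> w \<in> VS)"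
proof -
  have "inj ((`) Old)" by (rule inj_on_image) (simp add: inj_on_def)
  then have "{Old v, Old w} \<in> (`) Old ` S \<longleftrightarrow> {v, w} \<in> S" for S
    using inj_image_mem_iff[of "(`) Old" "{v, w}" S] by simp
  then show ?thesis unfolding neighbours_def G1_E_def by (auto simp: doubleton_eq_iff)
qed

lemma Old_in_neighbours_G2:
  "Old w \<in> neighbours (G2_E VX EdX VS EdS F0 l t u) (Old v) \<longleftrightarrow>
     Old w \<in> neighbours (G1_E VX EdX VS EdS F0 l t u) (Old v)
     \<and> \<not> (v \<in> VS \<and> w \<in> VX) \<and> \<not> (v \<in> VX \<and> w \<in> VS)"
  unfolding neighbours_def G2_E_def by (auto simp: doubleton_eq_iff)

lemma card_Old_image: "card (Old ` A) = card A"
  by (simp add: card_image inj_on_def)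

locale G1_construction =
  fixes VX :: "'a set" and EdX :: "'a set set" and VS :: "'a set" and EdS :: "'a set set"
    and F0 :: "'a set" and l t u :: nat
  assumes graph_X: "graph VX EdX" and graph_S: "graph VS EdS"
    and disjoint_X_S: "VX \<inter> VS = {}" and F0_subset: "F0 \<subseteq> VX"
begin

abbreviation "V1 \<equiv> G1_V VX VS l t u"
abbreviation "E1 \<equiv> G1_E VX EdX VS EdS F0 l t u"
abbreviation "E2 \<equiv> G2_E VX EdX VS EdS F0 l t u"

lemma finite_X: "finite VX"
  using graph_X unfolding graph_def by blast

lemma Old_neighbour_X_G1:
  assumes "v \<in> VX" "Old w \<in> neighbours E1 (Old v)"
  shows "w \<in> neighbours EdX v \<or> (v \<in> F0 \<and> w \<in> VS)"
  using assms neighbours_graphD[OF graph_S, of w v] disjoint_X_S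
  unfolding Old_in_neighbours_G1 by (auto simp: neighbours_def)

lemma Old_neighbour_S_G1:
  assumes "v \<in> VS" "Old w \<in> neighbours E1 (Old v)"
  shows "w \<in> neighbours EdS v \<or> w \<in> F0"
  using assms neighbours_graphD[OF graph_X, of w v] disjoint_X_S F0_subset
  unfolding Old_in_neighbours_G1 by (auto simp: neighbours_def)

lemma Old_neighbour_X_G2:
  assumes "v \<in> VX" "Old w \<in> neighbours E2 (Old v)"
  shows "w \<in> neighbours EdX v"
  using assms Old_neighbour_X_G1 unfolding Old_in_neighbours_G2 by blast

lemma Old_neighbour_S_G2:
  assumes "v \<in> VS" "Old w \<in> neighbours E2 (Old v)"
  shows "w \<in> neighbours EdS v"
  using assms Old_neighbour_S_G1 F0_subset unfolding Old_in_neighbours_G2 by blast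

lemma G1_edge_meets_X_or_in_S:
  assumes "e \<in> E1"
  shows "e \<inter> Old ` VX \<noteq> {} \<or> (e \<subseteq> Old ` VS \<and> card e = 2)"
  using assms F0_subset
proof (unfold G1_E_def, elim UnE)
  assume "e \<in> (`) Old ` (EdX \<union> EdS)"
  then obtain e' where e': "e' \<in> EdX \<union> EdS" "e = Old ` e'" by blast
  then have card: "card e' = 2" and "e' \<subseteq> VX \<or> e' \<subseteq> VS"
    using graph_X graph_S unfolding graph_def by auto
  then show ?thesis
  proof (elim disjE)
    assume "e' \<subseteq> VX"
    moreover have "e' \<noteq> {}" using card by auto
    ultimately show ?thesis using e'(2) by blast
  next
    assume "e' \<subseteq> VS"
    then show ?thesis using e'(2) card card_Old_image[of e'] by auto
  qed
qed auto

lemma no_large_matching: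
  assumes "E \<subseteq> E1"
  shows "\<not> has_matching E (card VX + card VS div 2 + 1)"
proof
  assume "has_matching E (card VX + card VS div 2 + 1)"
  then obtain M where M: "M \<subseteq> E" "finite M" "card M = card VX + card VS div 2 + 1" "pairwise disjnt M"
    unfolding has_matching_def by blast
  have "e \<inter> Old ` VX \<noteq> {} \<or> (e \<subseteq> Old ` VS \<and> card e = 2)" if "e \<in> M" for e
    using that M(1) assms G1_edge_meets_X_or_in_S by blast
  then have "card M \<le> card (Old ` VX) + card (Old ` VS) div 2"
    using M finite_X graph_S unfolding graph_def by (intro card_matching_le) auto
  then show False using M by (simp add: card_Old_image)
qed

end

locale G1_Kab_construction = G1_construction +
  assumes X_K1l_free: "\<not> has_Kab VX EdX 1 l" and card_F0: "card F0 = l - 1"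
    and two_le_l: "2 \<le> l" and l_le_t: "l \<le> t"
begin

lemma card_neighbours_X_less: "card (neighbours EdX v) < l"
  using card_neighbours_less[OF graph_X X_K1l_free] two_le_l by simp

lemma l_subset_not_subset_F0:
  assumes "card F = l" shows "\<not> F \<subseteq> F0"
proof
  assume "F \<subseteq> F0"
  then have "card F \<le> card F0" using F0_subset finite_X by (meson card_mono finite_subset)
  then show False using assms card_F0 two_le_l by simp
qed

lemma common_neighbours_of_l_subset:
  assumes "F \<subseteq> VX" "card F = l"
    and "W \<subseteq> V1" "W \<inter> Old ` F = {}" "\<forall>w\<in>W. Old ` F \<subseteq> neighbours E1 w"
  shows "W \<subseteq> New F ` {1..t-1}"
proof
  fix c assume "c \<in> W"
  then have c: "c \<in> V1" "Old ` F \<subseteq> neighbours E1 c" using assms(3,5) by blast+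
  have "F \<noteq> {}" using assms(2) two_le_l by auto
  show "c \<in> New F ` {1..t-1}"
  proof (cases c)
    case (Old v)
    then have v: "v \<in> VX \<union> VS" using c(1) unfolding G1_V_def by auto
    show ?thesis
    proof (cases "v \<in> VS")
      case True
      then have "F \<subseteq> F0"
        using c(2) Old_neighbour_S_G1 neighbours_graphD[OF graph_S] assms(1) disjoint_X_S Old
        by blast
      then show ?thesis using l_subset_not_subset_F0 assms(2) by blast
    next
      case False
      then have "F \<subseteq> neighbours EdX v"
        using c(2) Old_neighbour_X_G1 v assms(1) disjoint_X_S Old by blast
      then have "card F \<le> card (neighbours EdX v)"
        using neighbours_subset[OF graph_X] finite_X by (meson card_mono finite_subset)
      then show ?thesis using card_neighbours_X_less assms(2) by (metis leD)
    qed
  next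
    case (New F' i)
    from c(2) \<open>F \<noteq> {}\<close> have "F \<subseteq> F'" "F' \<subseteq> VX" "card F' = l" "1 \<le> i" "i \<le> t - 1"
      unfolding New neighbours_New_G1 by (auto split: if_splits)
    then have "F = F'" using assms(2) finite_X by (metis card_subset_eq finite_subset)
    then show ?thesis using New \<open>1 \<le> i\<close> \<open>i \<le> t - 1\<close> by auto
  next
    case (UV j)
    from c(2) \<open>F \<noteq> {}\<close> have "F \<subseteq> F0" unfolding UV neighbours_UV_G1 by (auto split: if_splits)
    then show ?thesis using l_subset_not_subset_F0 assms(2) by blast
  qed
qed

lemma Kab_side_in_X_S:
  assumes "E \<subseteq> E1" "P \<subseteq> V1" "P \<inter> Q = {}" "\<forall>p\<in>P. Q \<subseteq> neighbours E p"
    and "l \<le> card Q" "card P + card Q = l + t"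
  shows "P \<subseteq> Old ` (VX \<union> VS)"
proof
  fix c assume "c \<in> P"
  then have c: "c \<in> V1" "Q \<subseteq> neighbours E1 c"
    using assms(2,4) neighbours_mono[OF assms(1)] by blast+
  have "Q \<noteq> {}" using assms(5) two_le_l by auto
  show "c \<in> Old ` (VX \<union> VS)"
  proof (cases c)
    case (Old v)
    then show ?thesis using c(1) unfolding G1_V_def by auto
  next
    case (New F i)
    from c(2) \<open>Q \<noteq> {}\<close> have F: "Q \<subseteq> Old ` F" "F \<subseteq> VX" "card F = l"
      unfolding New neighbours_New_G1 by (auto split: if_splits)
    then have "Q = Old ` F"
      using assms(5) finite_X card_Old_image[of F] by (metis card_seteq finite_imageI finite_subset)
    then have "P \<subseteq> New F ` {1..t-1}"
      using common_neighbours_of_l_subset[OF F(2,3) assms(2)] assms(3,4) neighbours_mono[OF assms(1)]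
      by blast
    then have "card P \<le> t - 1"
      using card_mono[of "New F ` {1..t-1}" P] card_image_le[of "{1..t-1}" "New F"] by simp
    then show ?thesis
      using assms(6) \<open>Q = Old ` F\<close> F(3) two_le_l l_le_t by (simp add: card_Old_image)
  next
    case (UV j)
    from c(2) \<open>Q \<noteq> {}\<close> have "Q \<subseteq> Old ` F0"
      unfolding UV neighbours_UV_G1 by (auto split: if_splits)
    then have "card Q \<le> l - 1"
      using card_F0 card_Old_image[of F0] F0_subset finite_X
      by (metis card_mono finite_imageI finite_subset)
    then show ?thesis using assms(5) two_le_l by simp
  qed
qed

lemma Kab_sides_in_R_S:
  assumes "E \<subseteq> E1"
    and X_neighbours: "\<And>v w. v \<in> VX - R \<Longrightarrow> Old w \<in> neighbours E (Old v) \<Longrightarrow> w \<in> neighbours EdX v"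
    and AB: "A \<subseteq> V1" "B \<subseteq> V1" "A \<inter> B = {}" "card A = l" "card B = t"
      "\<forall>v\<in>A. B \<subseteq> neighbours E v" "\<forall>w\<in>B. A \<subseteq> neighbours E w"
  shows "A \<union> B \<subseteq> Old ` (R \<union> VS)"
proof
  have old: "A \<union> B \<subseteq> Old ` (VX \<union> VS)"
    using Kab_side_in_X_S[OF assms(1), of A B] Kab_side_in_X_S[OF assms(1), of B A] AB l_le_t
    by (auto simp: Int_commute)
  fix c assume "c \<in> A \<union> B"
  then obtain Q where Q: "Q \<subseteq> A \<union> B" "l \<le> card Q" "Q \<subseteq> neighbours E c"
    using AB l_le_t by (metis Un_upper1 Un_upper2 UnE order_refl)
  obtain v where v: "c = Old v" "v \<in> VX \<union> VS" using \<open>c \<in> A \<union> B\<close> old by blast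
  show "c \<in> Old ` (R \<union> VS)"
  proof (rule ccontr)
    assume "c \<notin> Old ` (R \<union> VS)"
    then have "v \<in> VX - R" using v by auto
    then have "Q \<subseteq> Old ` neighbours EdX v" using Q(1,3) old X_neighbours v(1) by blast
    then have "card Q \<le> card (neighbours EdX v)"
      using card_Old_image neighbours_subset[OF graph_X] finite_X
      by (metis card_mono finite_imageI finite_subset)
    then show False using Q(2) card_neighbours_X_less[of v] by simp
  qed
qed

lemma G1_Kab_free:
  assumes "card VS \<le> t"
  shows "\<not> has_Kab V1 E1 l t"
proof
  assume "has_Kab V1 E1 l t"
  then obtain A B where AB: "A \<subseteq> V1" "B \<subseteq> V1" "A \<inter> B = {}" "card A = l" "card B = t"
      "\<forall>v\<in>A. B \<subseteq> neighbours E1 v" "\<forall>w\<in>B. A \<subseteq> neighbours E1 w"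
    unfolding has_Kab_iff_neighbours by blast
  have "A \<union> B \<subseteq> Old ` (F0 \<union> VS)"
    using Kab_sides_in_R_S[OF order_refl _ AB] Old_neighbour_X_G1 by blast
  then have "card (A \<union> B) \<le> card F0 + card VS"
    using card_Old_image[of "F0 \<union> VS"] card_Un_le[of F0 VS] F0_subset finite_X graph_S
    unfolding graph_def by (metis card_mono finite_Un finite_imageI finite_subset order_trans)
  moreover have "card (A \<union> B) = l + t"
    using AB two_le_l l_le_t by (metis card_Un_disjoint card.infinite not_numeral_le_zero order_trans)
  ultimately show False using assms card_F0 two_le_l by simp
qed

lemma G2_Kab_free:
  assumes "\<not> has_Kab VS EdS l t"
  shows "\<not> has_Kab V1 E2 l t"
proof
  assume "has_Kab V1 E2 l t"
  then obtain A B where AB: "A \<subseteq> V1" "B \<subseteq> V1" "A \<inter> B = {}" "card A = l" "card B = t"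
      "\<forall>v\<in>A. B \<subseteq> neighbours E2 v" "\<forall>w\<in>B. A \<subseteq> neighbours E2 w"
    unfolding has_Kab_iff_neighbours by blast
  have "A \<union> B \<subseteq> Old ` ({} \<union> VS)"
    using Kab_sides_in_R_S[OF G2_E_subset_G1_E _ AB] Old_neighbour_X_G2 by blast
  then have A: "A = Old ` (Old -` A)" "Old -` A \<subseteq> VS" and B: "B = Old ` (Old -` B)" "Old -` B \<subseteq> VS"
    by auto
  have "has_Kab VS EdS l t"
    unfolding has_Kab_iff_neighbours
  proof (intro exI conjI)
    show "Old -` A \<inter> Old -` B = {}" using AB(3) by auto
    show "card (Old -` A) = l" "card (Old -` B) = t"
      using A(1) B(1) AB(4,5) card_Old_image by metis+
    show "\<forall>v\<in>Old -` A. Old -` B \<subseteq> neighbours EdS v" "\<forall>w\<in>Old -` B. Old -` A \<subseteq> neighbours EdS w"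
      using AB(6,7) A(2) B(2) Old_neighbour_S_G2 by blast+
  qed (use A B in auto)
  with assms show False ..
qed

end

theorem lemma2p5:
  fixes l t s x n :: nat
    and VX VS F0 :: "'a set" and EdX EdS :: "'a set set"
  assumes "2 \<le> l" "l \<le> t" "s \<ge> l + 1" "n \<ge> 2 * s + 1" "x \<le> s" "l \<le> x"
    and "n \<ge> x + (t - 1) * (x choose l) + 2 * (s - x) + 1"
    and "graph VX EdX" "card VX = x" "\<not> has_Kab VX EdX 1 l" "card EdX = ex_Kab x 1 l"
    and "graph VS EdS" "card VS = 2 * (s - x) + 1" "\<not> has_Kab VS EdS l t"
    and "card EdS = ex_Kab (2 * (s - x) + 1) l t"
    and "VX \<inter> VS = {}"
    and "F0 \<subseteq> VX" "card F0 = l - 1"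
  defines "u \<equiv> n - x - (t - 1) * (x choose l) - 2 * (s - x) - 1"
  shows "(2 * (s - x) + 1 \<le> t \<longrightarrow>
            \<not> has_Kab (G1_V VX VS l t u) (G1_E VX EdX VS EdS F0 l t u) l t
          \<and> \<not> has_matching (G1_E VX EdX VS EdS F0 l t u) (s + 1))
       \<and> (2 * (s - x) + 1 \<ge> t + 1 \<longrightarrow>
            \<not> has_Kab (G1_V VX VS l t u) (G2_E VX EdX VS EdS F0 l t u) l t
          \<and> \<not> has_matching (G2_E VX EdX VS EdS F0 l t u) (s + 1))"
proof -
  interpret G1_Kab_construction VX EdX VS EdS F0 l t u
    using assms by unfold_locales auto
  have "card VX + card VS div 2 + 1 = s + 1"
    using assms(5,9,13) by simp
  then show ?thesis
    using G1_Kab_free G2_Kab_free assms(13,14)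
      no_large_matching[OF order_refl] no_large_matching[OF G2_E_subset_G1_E]
    by auto
qed

end
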